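(* Consider a power network modeled as an undirected graph with $n$ buses and $m$ transmission lines, indexed by $\ell\in\{1,\dots,m\}$, where each line $\ell$ is given an orientation from a bus $i$ to a bus $j$. Let $A\in\mathbb{R}^{m\times n}$ be the branch-bus incidence matrix (row $\ell$ has entry $1$ in column $i$, entry $-1$ in column $j$, and $0$ elsewhere), and let $|A|$ denote its entrywise absolute value. For each line $\ell$ let $\check{L}_\ell:\mathbb{R}\to\mathbb{R}$ be a general loss function and $\check{F}_\ell:\mathbb{R}\to\mathbb{R}$ a general mid-line power flow function (as defined in the context), and define $L,F:\mathbb{R}^m\to\mathbb{R}^m$ by $L_\ell(\Delta\theta)=\check{L}_\ell(\Delta\theta_\ell)$ and $F_\ell(\Delta\theta)=\check{F}_\ell(\Delta\theta_\ell)$. Define $T:\mathbb{R}^m\to\mathbb{R}^n$ by $$T(\Delta\theta)=\tfrac12|A|^{\dagger}L(\Delta\theta)+A^{\dagger}F(\Delta\theta),$$ where ${}^\dagger$ denotes transpose. Let $C:\mathbb{R}^n\to\mathbb{R}$ be convex, and let $D,\underline{P},\overline{P}\in\mathbb{R}^n$ and $\underline{\Delta\theta},\overline{\Delta\theta}\in\mathbb{R}^m$ be given. For a choice of reference bus $\nu\in\{1,\dots,n\}$, let $A^{(\nu)}\in\mathbb{R}^{m\times(n-1)}$ be $A$ with column $\nu$ removed, and define the economic dispatch problem with reference bus $\nu$ as $$\min_{P\in\mathbb{R}^n,\ \vartheta\in\mathbb{R}^{n-1}} C(P)\quad\text{s.t.}\quad T(A^{(\nu)}\vartheta)=P-D,\quad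 \underline{P}\le P\le\overline{P},\quad \underline{\Delta\theta}\le A^{(\nu)}\vartheta\le\overline{\Delta\theta}.$$ Consider two instances of this problem, defined with (possibly different) reference buses $\nu_1$ and $\nu_2$, with all other data identical. If $(P^\star,\dot\theta^\star)\in\mathbb{R}^n\times\mathbb{R}^{n-1}$ is a solution (optimal point) of the first instance, then there exists $\ddot\theta^\star\in\mathbb{R}^{n-1}$ such that $(P^\star,\ddot\theta^\star)$ is a solution of the second instance.
   Context: Fix for each line $\ell$ constants $\psi_\ell\in\mathbb{R}$ (the angle of the line's off-nominal transformer turns ratio). Let $\mathcal{D}_\ell=[-\tfrac{\pi}{2}+\psi_\ell,\tfrac{\pi}{2}+\psi_\ell]$ and $\mathcal{D}_{\ell+}=[\psi_\ell,\tfrac{\pi}{2}+\psi_\ell]$. A general loss function $\check{L}_\ell:\mathbb{R}\to\mathbb{R}$ is a function that is strictly convex on $\mathcal{D}_\ell$, continuously differentiable, non-negative, symmetric about the point $\psi_\ell$, and strictly monotonically increasing on $\mathcal{D}_{\ell+}$. A general mid-line power flow function $\check{F}_\ell:\mathbb{R}\to\mathbb{R}$ is a continuously differentiable function that is strictly monotonic on $\mathcal{D}_\ell$. Inequalities between vectors are componentwise. A "solution" means a global minimizer of the stated optimization problem. *)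

theory Defs
  imports "HOL-Analysis.Analysis"
begin

(* Conventions: buses are indexed 0..<n, lines 0..<m (0-based).
   Vectors in R^k are real lists of length k. Line l is oriented from bus fr l to bus tb l. *)

definition strictly_convex_on :: "real set \<Rightarrow> (real \<Rightarrow> real) \<Rightarrow> bool" where
  "strictly_convex_on S f \<longleftrightarrow>
     (\<forall>x\<in>S. \<forall>y\<in>S. \<forall>t. x \<noteq> y \<and> 0 < t \<and> t < 1 \<longrightarrow>
        f ((1 - t) * x + t * y) < (1 - t) * f x + t * f y)"

definition cont_diff :: "(real \<Rightarrow> real) \<Rightarrow> bool" where
  "cont_diff f \<longleftrightarrow> (\<exists>f'. (\<forall>x. (f has_real_derivative f' x) (at x)) \<and> continuous_on UNIV f')"

definition dom_line :: "real \<Rightarrow> real set" where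
  "dom_line \<psi> = {-(pi/2) + \<psi> .. pi/2 + \<psi>}"

definition dom_line_plus :: "real \<Rightarrow> real set" where
  "dom_line_plus \<psi> = {\<psi> .. pi/2 + \<psi>}"

(* general loss function for a line with transformer angle \<psi> *)
definition general_loss :: "real \<Rightarrow> (real \<Rightarrow> real) \<Rightarrow> bool" where
  "general_loss \<psi> Lc \<longleftrightarrow>
     strictly_convex_on (dom_line \<psi>) Lc \<and> cont_diff Lc \<and> (\<forall>x. 0 \<le> Lc x) \<and>
     (\<forall>x. Lc (\<psi> + x) = Lc (\<psi> - x)) \<and> strict_mono_on (dom_line_plus \<psi>) Lc"

definition general_flow :: "real \<Rightarrow> (real \<Rightarrow> real) \<Rightarrow> bool" where
  "general_flow \<psi> Fc \<longleftrightarrow>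
     cont_diff Fc \<and> (strict_mono_on (dom_line \<psi>) Fc \<or> strict_antimono_on (dom_line \<psi>) Fc)"

definition inc :: "(nat \<Rightarrow> nat) \<Rightarrow> (nat \<Rightarrow> nat) \<Rightarrow> nat \<Rightarrow> nat \<Rightarrow> real" where
  "inc fr tb l k = (if k = fr l then 1 else if k = tb l then -1 else 0)"

definition red_apply :: "nat \<Rightarrow> nat \<Rightarrow> (nat \<Rightarrow> nat) \<Rightarrow> (nat \<Rightarrow> nat) \<Rightarrow> nat \<Rightarrow> real list \<Rightarrow> real list" where
  "red_apply n m fr tb \<nu> vt =
     map (\<lambda>l. \<Sum>k<n-1. inc fr tb l (if k < \<nu> then k else Suc k) * vt ! k) [0..<m]"

definition Tmap :: "nat \<Rightarrow> nat \<Rightarrow> (nat \<Rightarrow> nat) \<Rightarrow> (nat \<Rightarrow> nat) \<Rightarrow> (nat \<Rightarrow> real \<Rightarrow> real)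
     \<Rightarrow> (nat \<Rightarrow> real \<Rightarrow> real) \<Rightarrow> real list \<Rightarrow> real list" where
  "Tmap n m fr tb Lc Fc d =
     map (\<lambda>i. (1/2) * (\<Sum>l<m. \<bar>inc fr tb l i\<bar> * Lc l (d ! l))
              + (\<Sum>l<m. inc fr tb l i * Fc l (d ! l))) [0..<n]"

definition list_le :: "real list \<Rightarrow> real list \<Rightarrow> bool" where
  "list_le x y \<longleftrightarrow> length x = length y \<and> (\<forall>i<length x. x ! i \<le> y ! i)"

definition convex_on_Rn :: "nat \<Rightarrow> (real list \<Rightarrow> real) \<Rightarrow> bool" where
  "convex_on_Rn n C \<longleftrightarrow>
     (\<forall>x y t. length x = n \<and> length y = n \<and> 0 \<le> t \<and> t \<le> 1 \<longrightarrow>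
        C (map2 (\<lambda>a b. (1 - t) * a + t * b) x y) \<le> (1 - t) * C x + t * C y)"

definition ed_feasible :: "nat \<Rightarrow> nat \<Rightarrow> (nat \<Rightarrow> nat) \<Rightarrow> (nat \<Rightarrow> nat) \<Rightarrow> (nat \<Rightarrow> real \<Rightarrow> real)
     \<Rightarrow> (nat \<Rightarrow> real \<Rightarrow> real) \<Rightarrow> real list \<Rightarrow> real list \<Rightarrow> real list \<Rightarrow> real list \<Rightarrow> real list
     \<Rightarrow> nat \<Rightarrow> real list \<Rightarrow> real list \<Rightarrow> bool" where
  "ed_feasible n m fr tb Lc Fc D Plo Phi dlo dhi \<nu> P vt \<longleftrightarrow>
     length P = n \<and> length vt = n - 1 \<and>
     Tmap n m fr tb Lc Fc (red_apply n m fr tb \<nu> vt) = map2 (-) P D \<and>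
     list_le Plo P \<and> list_le P Phi \<and>
     list_le dlo (red_apply n m fr tb \<nu> vt) \<and> list_le (red_apply n m fr tb \<nu> vt) dhi"

definition ed_solution :: "nat \<Rightarrow> nat \<Rightarrow> (nat \<Rightarrow> nat) \<Rightarrow> (nat \<Rightarrow> nat) \<Rightarrow> (nat \<Rightarrow> real \<Rightarrow> real)
     \<Rightarrow> (nat \<Rightarrow> real \<Rightarrow> real) \<Rightarrow> (real list \<Rightarrow> real) \<Rightarrow> real list \<Rightarrow> real list \<Rightarrow> real list
     \<Rightarrow> real list \<Rightarrow> real list \<Rightarrow> nat \<Rightarrow> real list \<Rightarrow> real list \<Rightarrow> bool" where
  "ed_solution n m fr tb Lc Fc C D Plo Phi dlo dhi \<nu> P vt \<longleftrightarrow>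
     ed_feasible n m fr tb Lc Fc D Plo Phi dlo dhi \<nu> P vt \<and>
     (\<forall>P' vt'. ed_feasible n m fr tb Lc Fc D Plo Phi dlo dhi \<nu> P' vt' \<longrightarrow> C P \<le> C P')"

end

theory Submission
  imports Defs
begin

text \<open>
  Let \<open>A\<^sub>\<nu>\<close> be the incidence matrix \<open>A\<close> with column \<open>\<nu>\<close> removed. Then \<open>A\<^sub>\<nu> \<vartheta> = A \<theta>\<close>,
  where \<open>\<theta>\<close> is \<open>\<vartheta>\<close> with a zero inserted at position \<open>\<nu>\<close>; and since every row of \<open>A\<close> sums
  to zero, \<open>A \<theta>\<close> does not change when the constant \<open>\<theta> \<nu>'\<close> is subtracted from \<open>\<theta>\<close>. Deleting the
  entry \<open>\<nu>'\<close>, now zero, yields \<open>\<vartheta>'\<close> with \<open>A\<^sub>\<nu>\<^sub>' \<vartheta>' = A\<^sub>\<nu> \<vartheta>\<close>. As the dispatch problem depends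
  on \<open>\<vartheta>\<close> only through \<open>A\<^sub>\<nu> \<vartheta>\<close>, both instances have the same feasible generations \<open>P\<close> and
  hence the same solutions.
\<close>

definition skip_index :: "nat \<Rightarrow> nat \<Rightarrow> nat" where
  "skip_index \<nu> k = (if k < \<nu> then k else Suc k)"

definition ref_extend :: "nat \<Rightarrow> real list \<Rightarrow> nat \<Rightarrow> real" where
  "ref_extend \<nu> vt k = (if k < \<nu> then vt ! k else if k = \<nu> then 0 else vt ! (k - 1))"

definition ref_reduce :: "nat \<Rightarrow> nat \<Rightarrow> (nat \<Rightarrow> real) \<Rightarrow> real list" where
  "ref_reduce n \<nu> \<theta> = map (\<lambda>k. \<theta> (skip_index \<nu> k) - \<theta> \<nu>) [0..<n-1]"

definition angle_diffs :: "nat \<Rightarrow> (nat \<Rightarrow> nat) \<Rightarrow> (nat \<Rightarrow> nat) \<Rightarrow> (nat \<Rightarrow> real) \<Rightarrow> real list" where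
  "angle_diffs m fr tb \<theta> = map (\<lambda>l. \<theta> (fr l) - \<theta> (tb l)) [0..<m]"

lemma sum_inc_mult:
  assumes "fr l < n" "tb l < n" "fr l \<noteq> tb l"
  shows "(\<Sum>k<n. inc fr tb l k * g k) = g (fr l) - g (tb l)"
proof -
  have "(\<Sum>k<n. inc fr tb l k * g k)
      = (\<Sum>k<n. (if k = fr l then g k else 0) + (if k = tb l then - g k else 0))"
    by (rule sum.cong) (use assms in \<open>auto simp: inc_def\<close>)
  also have "\<dots> = g (fr l) - g (tb l)"
    using assms by (simp add: sum.distrib)
  finally show ?thesis .
qed

lemma inj_on_skip_index: "inj_on (skip_index \<nu>) A"
  by (auto simp: inj_on_def skip_index_def split: if_splits)

lemma skip_index_image:
  assumes "\<nu> < n"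
  shows "skip_index \<nu> ` {..<n-1} = {..<n} - {\<nu>}"
proof
  show "skip_index \<nu> ` {..<n-1} \<subseteq> {..<n} - {\<nu>}"
    using assms by (auto simp: skip_index_def)
  show "{..<n} - {\<nu>} \<subseteq> skip_index \<nu> ` {..<n-1}"
  proof
    fix j assume j: "j \<in> {..<n} - {\<nu>}"
    show "j \<in> skip_index \<nu> ` {..<n-1}"
    proof (cases "j < \<nu>")
      case True
      then show ?thesis using j assms by (intro image_eqI[of _ _ j]) (auto simp: skip_index_def)
    next
      case False
      then show ?thesis using j by (intro image_eqI[of _ _ "j - 1"]) (auto simp: skip_index_def)
    qed
  qed
qed

lemma ref_extend_ref_reduce:
  assumes "\<nu> < n" "k < n"
  shows "ref_extend \<nu> (ref_reduce n \<nu> \<theta>) k = \<theta> k - \<theta> \<nu>"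
  using assms by (auto simp: ref_extend_def ref_reduce_def skip_index_def)

lemma red_apply_eq_angle_diffs:
  assumes lines: "\<forall>l<m. fr l < n \<and> tb l < n \<and> fr l \<noteq> tb l" and "\<nu> < n"
  shows "red_apply n m fr tb \<nu> vt = angle_diffs m fr tb (ref_extend \<nu> vt)"
  unfolding red_apply_def angle_diffs_def
proof (rule map_cong[OF refl])
  fix l assume "l \<in> set [0..<m]"
  then have l: "fr l < n" "tb l < n" "fr l \<noteq> tb l"
    using lines by auto
  let ?\<theta> = "ref_extend \<nu> vt"
  have "(\<Sum>k<n-1. inc fr tb l (if k < \<nu> then k else Suc k) * vt ! k)
      = (\<Sum>k<n-1. inc fr tb l (skip_index \<nu> k) * ?\<theta> (skip_index \<nu> k))"
    by (rule sum.cong) (auto simp: skip_index_def ref_extend_def)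
  also have "\<dots> = (\<Sum>j\<in>skip_index \<nu> ` {..<n-1}. inc fr tb l j * ?\<theta> j)"
    by (simp add: sum.reindex[OF inj_on_skip_index])
  also have "\<dots> = (\<Sum>j\<in>{..<n} - {\<nu>}. inc fr tb l j * ?\<theta> j)"
    using skip_index_image[OF \<open>\<nu> < n\<close>] by simp
  also have "\<dots> = (\<Sum>j<n. inc fr tb l j * ?\<theta> j)"
    using \<open>\<nu> < n\<close> by (subst sum_diff1) (auto simp: ref_extend_def)
  also have "\<dots> = ?\<theta> (fr l) - ?\<theta> (tb l)"
    using l by (rule sum_inc_mult)
  finally show "(\<Sum>k<n-1. inc fr tb l (if k < \<nu> then k else Suc k) * vt ! k)
      = ?\<theta> (fr l) - ?\<theta> (tb l)" .
qed

lemma red_apply_change_ref: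
  assumes lines: "\<forall>l<m. fr l < n \<and> tb l < n \<and> fr l \<noteq> tb l" and "\<nu> < n" "\<nu>' < n"
  obtains vt' where "length vt' = n - 1"
    and "red_apply n m fr tb \<nu>' vt' = red_apply n m fr tb \<nu> vt"
proof
  define \<theta> where "\<theta> = ref_extend \<nu> vt"
  show "length (ref_reduce n \<nu>' \<theta>) = n - 1"
    by (simp add: ref_reduce_def)
  have "angle_diffs m fr tb (ref_extend \<nu>' (ref_reduce n \<nu>' \<theta>)) = angle_diffs m fr tb \<theta>"
    using lines \<open>\<nu>' < n\<close> by (auto simp: angle_diffs_def ref_extend_ref_reduce)
  then show "red_apply n m fr tb \<nu>' (ref_reduce n \<nu>' \<theta>) = red_apply n m fr tb \<nu> vt"
    using assms by (simp add: red_apply_eq_angle_diffs \<theta>_def)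
qed

lemma ed_feasible_change_ref:
  assumes "\<forall>l<m. fr l < n \<and> tb l < n \<and> fr l \<noteq> tb l" and "\<nu> < n" "\<nu>' < n"
    and "ed_feasible n m fr tb Lc Fc D Plo Phi dlo dhi \<nu> P vt"
  obtains vt' where "ed_feasible n m fr tb Lc Fc D Plo Phi dlo dhi \<nu>' P vt'"
proof -
  obtain vt' where "length vt' = n - 1"
    and "red_apply n m fr tb \<nu>' vt' = red_apply n m fr tb \<nu> vt"
    using red_apply_change_ref[OF assms(1-3)] .
  with assms(4) show ?thesis
    by (intro that[of vt']) (simp add: ed_feasible_def)
qed

lemma ed_solution_change_ref:
  assumes lines: "\<forall>l<m. fr l < n \<and> tb l < n \<and> fr l \<noteq> tb l" and "\<nu> < n" "\<nu>' < n"
    and sol: "ed_solution n m fr tb Lc Fc C D Plo Phi dlo dhi \<nu> P vt"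
  shows "\<exists>vt'. ed_solution n m fr tb Lc Fc C D Plo Phi dlo dhi \<nu>' P vt'"
proof -
  have feas: "ed_feasible n m fr tb Lc Fc D Plo Phi dlo dhi \<nu> P vt"
    and opt: "\<And>P' vt'. ed_feasible n m fr tb Lc Fc D Plo Phi dlo dhi \<nu> P' vt' \<Longrightarrow> C P \<le> C P'"
    using sol unfolding ed_solution_def by auto
  obtain vt' where feas': "ed_feasible n m fr tb Lc Fc D Plo Phi dlo dhi \<nu>' P vt'"
    using ed_feasible_change_ref[OF lines \<open>\<nu> < n\<close> \<open>\<nu>' < n\<close> feas] .
  have "C P \<le> C P'" if "ed_feasible n m fr tb Lc Fc D Plo Phi dlo dhi \<nu>' P' vt''" for P' vt''
    using ed_feasible_change_ref[OF lines \<open>\<nu>' < n\<close> \<open>\<nu> < n\<close> that] opt by blast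
  with feas' show ?thesis
    unfolding ed_solution_def by blast
qed

theorem theorem1:
  fixes n m :: nat and fr tb :: "nat \<Rightarrow> nat" and \<psi> :: "nat \<Rightarrow> real"
    and Lc Fc :: "nat \<Rightarrow> real \<Rightarrow> real" and C :: "real list \<Rightarrow> real"
    and D Plo Phi dlo dhi Pstar th1 :: "real list" and \<nu>1 \<nu>2 :: nat
  assumes lines: "\<forall>l<m. fr l < n \<and> tb l < n \<and> fr l \<noteq> tb l"
    and loss: "\<forall>l<m. general_loss (\<psi> l) (Lc l)"
    and flow: "\<forall>l<m. general_flow (\<psi> l) (Fc l)"
    and convC: "convex_on_Rn n C"
    and lenD: "length D = n" and lenPlo: "length Plo = n" and lenPhi: "length Phi = n"
    and lendlo: "length dlo = m" and lendhi: "length dhi = m"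
    and ref1: "\<nu>1 < n" and ref2: "\<nu>2 < n"
    and sol: "ed_solution n m fr tb Lc Fc C D Plo Phi dlo dhi \<nu>1 Pstar th1"
  shows "\<exists>th2. ed_solution n m fr tb Lc Fc C D Plo Phi dlo dhi \<nu>2 Pstar th2"
  using ed_solution_change_ref[OF lines ref1 ref2 sol] .

end
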